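(* For all positive integers $n$ and $k$, $$\sum_{i=1}^{k}\frac{(-1)^{i-1}}{i}\binom{in}{k}\binom{k}{i}=\frac{(-1)^{k-1}n}{k}.$$
   Context: Binomial coefficients $\binom{m}{j}$ for nonnegative integers $m,j$ are the usual ones, with $\binom{m}{j}=0$ when $j>m$. *)

theory Defs
  imports Complex_Main
begin

end

theory Submission imports Defs "HOL-Computational_Algebra.Polynomial" begin

text \<open>By absorption, \<open>(1/i)\<cdot>C(in,k) = (n/k)\<cdot>C(in-1,k-1)\<close>, and \<open>C(xn-1,k-1)\<close> is a polynomial
  in \<open>x\<close> of degree \<open>k-1\<close>. The \<open>k\<close>-th finite difference \<open>\<Sum>\<^sub>i (-1)^i C(k,i) f(i)\<close> of a
  polynomial of degree below \<open>k\<close> vanishes, so the sum over \<open>i = 1..k\<close> equals minus the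
  missing \<open>i = 0\<close> term, \<open>-C(-1,k-1) = -(-1)^(k-1)\<close>.\<close>

lemma alternating_binomial_sum_Suc:
  fixes f :: "nat \<Rightarrow> 'a::comm_ring_1"
  shows "(\<Sum>i\<le>Suc k. (-1)^i * of_nat (Suc k choose i) * f i)
       = - (\<Sum>i\<le>k. (-1)^i * of_nat (k choose i) * (f (Suc i) - f i))"
proof -
  have "(\<Sum>i\<le>Suc k. (-1)^i * of_nat (Suc k choose i) * f i)
      = f 0 + (\<Sum>i\<le>k. (-1)^Suc i * of_nat (k choose Suc i) * f (Suc i))
            + (\<Sum>i\<le>k. (-1)^Suc i * of_nat (k choose i) * f (Suc i))"
    by (subst sum.atMost_Suc_shift) (simp add: sum.distrib[symmetric] algebra_simps)
  also have "f 0 + (\<Sum>i\<le>k. (-1)^Suc i * of_nat (k choose Suc i) * f (Suc i))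
      = (\<Sum>i\<le>k. (-1)^i * of_nat (k choose i) * f i)"
    using sum.atMost_Suc_shift[of "\<lambda>i. (-1)^i * of_nat (k choose i) * f i" k] by (simp add: binomial_eq_0)
  also have "(\<Sum>i\<le>k. (-1)^i * of_nat (k choose i) * f i)
      + (\<Sum>i\<le>k. (-1)^Suc i * of_nat (k choose i) * f (Suc i))
      = - (\<Sum>i\<le>k. (-1)^i * of_nat (k choose i) * (f (Suc i) - f i))"
    by (simp add: right_diff_distrib sum_subtractf sum_negf)
  finally show ?thesis .
qed

lemma alternating_binomial_sum_power_eq_0:
  assumes "j < k"
  shows "(\<Sum>i\<le>k. (-1)^i * of_nat (k choose i) * of_nat i ^ j) = (0::'a::comm_ring_1)"
  using assms
proof (induction k arbitrary: j)
  case 0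
  then show ?case by simp
next
  case (Suc k)
  have power_diff: "of_nat (Suc i) ^ j - of_nat i ^ j = (\<Sum>l<j. of_nat (j choose l) * (of_nat i ^ l :: 'a))"
    for i
  proof -
    have "(of_nat (Suc i) :: 'a) ^ j = (\<Sum>l\<le>j. of_nat (j choose l) * of_nat i ^ l)"
      using binomial_ring[of "of_nat i :: 'a" 1 j] by (simp add: mult.commute add.commute)
    then show ?thesis
      by (simp add: lessThan_Suc_atMost[symmetric])
  qed
  have "(\<Sum>i\<le>Suc k. (-1)^i * of_nat (Suc k choose i) * (of_nat i ^ j :: 'a))
      = - (\<Sum>i\<le>k. (-1)^i * of_nat (k choose i) * (\<Sum>l<j. of_nat (j choose l) * of_nat i ^ l))"
    by (subst alternating_binomial_sum_Suc) (simp only: power_diff)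
  also have "\<dots> = - (\<Sum>l<j. of_nat (j choose l) * (\<Sum>i\<le>k. (-1)^i * of_nat (k choose i) * of_nat i ^ l))"
    by (simp add: sum_distrib_left sum_distrib_right algebra_simps sum.swap[of _ "{..<j}"])
  also have "\<dots> = 0"
    using Suc by simp
  finally show ?case .
qed

lemma alternating_binomial_sum_poly_eq_0:
  fixes p :: "'a::comm_ring_1 poly"
  assumes "degree p < k"
  shows "(\<Sum>i\<le>k. (-1)^i * of_nat (k choose i) * poly p (of_nat i)) = 0"
proof -
  have "(\<Sum>i\<le>k. (-1)^i * of_nat (k choose i) * poly p (of_nat i))
      = (\<Sum>j\<le>degree p. coeff p j * (\<Sum>i\<le>k. (-1)^i * of_nat (k choose i) * of_nat i ^ j))"
    by (simp add: poly_altdef sum_distrib_left sum_distrib_right algebra_simps sum.swap[of _ "{..k}"])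
  also have "\<dots> = 0"
    using assms by (intro sum.neutral ballI) (simp add: alternating_binomial_sum_power_eq_0)
  finally show ?thesis .
qed

lemma alternating_binomial_sum_poly_from_1:
  fixes p :: "'a::comm_ring_1 poly"
  assumes "degree p < k"
  shows "(\<Sum>i=1..k. (-1)^i * of_nat (k choose i) * poly p (of_nat i)) = - poly p 0"
  using alternating_binomial_sum_poly_eq_0[OF assms]
  by (simp add: atMost_atLeast0 sum.atLeast_Suc_atMost eq_neg_iff_add_eq_0 add.commute)

lemma gbinomial_minus_one: "((-1 :: 'a::field_char_0) gchoose m) = (-1)^m"
  using gbinomial_minus[of "1::'a" m] binomial_gbinomial[of m m] by simp

lemma gchoose_affine_polynomial:
  fixes a b :: "'a::field_char_0"
  obtains p where "degree p \<le> m" and "\<And>x. poly p x = (a * x + b) gchoose m"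
proof
  let ?p = "smult (1 / fact m) (\<Prod>t<m. [:b - of_nat t, a:])"
  show "degree ?p \<le> m"
  proof -
    have "degree (\<Prod>t<m. [:b - of_nat t, a:]) \<le> (\<Sum>t<m. degree [:b - of_nat t, a:])"
      using degree_prod_sum_le[of "{..<m}" "\<lambda>t. [:b - of_nat t, a:]"] by (simp add: o_def)
    also have "\<dots> \<le> (\<Sum>t<m. 1)"
      by (intro sum_mono) simp
    finally show ?thesis by simp
  qed
  show "poly ?p x = (a * x + b) gchoose m" for x
    using gbinomial_mult_fact[of m "a * x + b"]
    by (simp add: poly_prod atLeast0LessThan field_simps)
qed

theorem mainTheorem6:
  fixes n k :: nat
  assumes "n \<ge> 1" and "k \<ge> 1"
  shows "(\<Sum>i=1..k. (-1::real) ^ (i - 1) / real i * real ((i * n) choose k) * real (k choose i))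
         = (-1::real) ^ (k - 1) * real n / real k"
proof -
  obtain p :: "real poly" where deg: "degree p \<le> k - 1"
    and p: "\<And>x. poly p x = (real n * x - 1) gchoose (k - 1)"
    using gchoose_affine_polynomial[of "k - 1" "real n" "-1"] by auto
  have summand: "(-1) ^ (i - 1) / real i * real ((i * n) choose k) * real (k choose i)
      = - (real n / real k) * ((-1)^i * real (k choose i) * poly p (real i))" if "i \<in> {1..k}" for i
  proof -
    have "real ((i * n) choose k) = real i * real n / real k * ((real i * real n - 1) gchoose (k - 1))"
      using gbinomial_absorption'[of k "real (i * n)"] assms by (simp add: binomial_gbinomial)
    moreover have "(-1::real) ^ (i - 1) = - ((-1)^i)"
      using that by (cases i) auto
    ultimately show ?thesis
      using that by (simp add: p field_simps)
  qed
  have "(\<Sum>i=1..k. (-1::real) ^ (i - 1) / real i * real ((i * n) choose k) * real (k choose i))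
      = - (real n / real k) * (\<Sum>i=1..k. (-1)^i * real (k choose i) * poly p (real i))"
    by (simp only: sum.cong[OF refl summand] sum_distrib_left)
  also have "(\<Sum>i=1..k. (-1::real)^i * real (k choose i) * poly p (real i)) = - ((-1)^(k - 1))"
    using alternating_binomial_sum_poly_from_1[of p k] deg assms by (simp add: p gbinomial_minus_one)
  finally show ?thesis
    by simp
qed

end
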